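(* Let $N\ge 1$, $\kappa_t,\kappa_r\ge 0$ with $\kappa_t^2+\kappa_r^2>0$, $\gamma>0$, and let $A=\sum_{i=1}^N |h_i|\,|g_i|$, where all $|h_i|,|g_i|$ are mutually independent, each $|h_i|$ has PDF $f_{h}(x)=\sum_{m=1}^{M}2a^{(1)}_m x^{2b^{(1)}_m-1}e^{-c_1x^2}$ and each $|g_i|$ has PDF $f_{g}(x)=\sum_{k=1}^{K}2a^{(2)}_k x^{2b^{(2)}_k-1}e^{-c_2x^2}$ ($x\ge0$). Define the SDNR $\gamma_u=\dfrac{A^2}{(\kappa_t^2+\kappa_r^2)A^2+\frac1\gamma}$ and, for a transmission spectral efficiency $r_{\mathrm{th}}>0$, the throughput $\mathcal{D}^{\text{wo}}(r_{\mathrm{th}})=r_{\mathrm{th}}\Pr\big(\log_2(1+\gamma_u)>r_{\mathrm{th}}\big)$. Let the CDF of $A$ be given by the moment-matched generalized-$K$ model $$F_A(x)=\frac{1}{\Gamma(k_A)\Gamma(m_A)}\,\mathrm{G}_{1,3}^{2,1}\!\left(\Xi^2x^2\left|\begin{array}{c}1\\ k_A,m_A,0\end{array}\right.\right),$$ with parameters defined as follows. For $l\ge0$, $$\mu_{\chi}(l)=\sum_{m=1}^{M}\sum_{k=1}^{K}a^{(1)}_m a^{(2)}_k\left(\frac{c_1}{c_2}\right)^{-\frac{b^{(1)}_m-b^{(2)}_k}{2}}(c_1c_2)^{-\frac{b^{(1)}_m+b^{(2)}_k+l}{2}}\Gamma\!\Big(b^{(1)}_m+\frac l2\Big)\Gamma\!\Big(b^{(2)}_k+\frac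 l2\Big),$$ $$\mu_A(l)=\sum_{l_1=0}^{l}\sum_{l_2=0}^{l_1}\cdots\sum_{l_{N-1}=0}^{l_{N-2}}\binom{l}{l_1}\binom{l_1}{l_2}\cdots\binom{l_{N-2}}{l_{N-1}}\mu_{\chi}(l-l_1)\mu_{\chi}(l_1-l_2)\cdots\mu_{\chi}(l_{N-1}),$$ $a_A=\mu_A(6)\mu_A(2)+\mu_A(2)^2\mu_A(4)-2\mu_A(4)^2$, $b_A=\mu_A(6)\mu_A(2)-4\mu_A(4)^2+3\mu_A(2)^2\mu_A(4)$, $c_A=2\mu_A(2)^2\mu_A(4)$, $\Omega_A=\mu_A(2)$, $k_A=-\frac{b_A}{2a_A}+\frac{\sqrt{b_A^2-4a_Ac_A}}{2a_A}$, $m_A=-\frac{b_A}{2a_A}-\frac{\sqrt{b_A^2-4a_Ac_A}}{2a_A}$, $\Xi=\sqrt{k_Am_A/\Omega_A}$. Then $$\mathcal{D}^{\text{wo}}(r_{\mathrm{th}})=\begin{cases} r_{\mathrm{th}}\left(1-\dfrac{1}{\Gamma(k_A)\Gamma(m_A)}\mathrm{G}_{1,3}^{2,1}\!\left(\dfrac{\Xi^2\,\frac{2^{r_{\mathrm{th}}}-1}{\gamma}}{1-(\kappa_t^2+\kappa_r^2)(2^{r_{\mathrm{th}}}-1)}\left|\begin{array}{c}1\\ k_A,m_A,0\end{array}\right.\right)\right), & r_{\mathrm{th}}<\log_2\!\left(\frac{1}{\kappa_t^2+\kappa_r^2}+1\right),\\[2mm] 0, & r_{\mathrm{th}}\ge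\log_2\!\left(\frac{1}{\kappa_t^2+\kappa_r^2}+1\right).\end{cases}$$
   Context: Setting: an RIS-assisted UAV link without UAV disorientation or beam misalignment. A source S reaches a UAV only via a reconfigurable intelligent surface with $N$ elements using optimal phase shifts, so the end-to-end amplitude is $A=\sum_{i=1}^N|h_i||g_i|$, where $|h_i|$ (S-to-element) and $|g_i|$ (element-to-UAV) are independent mixture-Gamma random variables with the PDFs given in the claim (parameters $a^{(j)},b^{(j)},c_j>0$). Transceiver hardware imperfections are modeled by error vector magnitudes $\kappa_t$ (transmitter) and $\kappa_r$ (receiver), and $\gamma=h_l^2P_s/\sigma_w^2$ is the transmit SNR scaled by the deterministic spreading loss. $\mathrm{G}_{p,q}^{m,n}$ is the Meijer G-function and $\Gamma$ the Gamma function. The CDF of $A$ is modeled (as in the paper) by the generalized-$K$ distribution whose parameters $k_A,m_A,\Xi$ are obtained by matching the moments $\mu_A(2),\mu_A(4),\mu_A(6)$ of $A$; $\mu_\chi(l)$ is the $l$-th moment of $|h_i||g_i|$ and $\mu_A(l)$ the $l$-th moment of $A$. *)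

theory Defs
  imports "HOL-Probability.Probability"
begin

text \<open>Mellin--Barnes definition
  G^{m,n}_{p,q}(z | a; b) = 1/(2 pi i) * contour integral over L of
     prod_{j<=m} Gamma(b_j - s) prod_{j<=n} Gamma(1 - a_j + s)
     / (prod_{j>m} Gamma(1 - b_j + s) prod_{j>n} Gamma(a_j - s)) * z^s ds,
  specialised to m=2, n=1, p=1, q=3, a_1 = 1, (b_1,b_2,b_3) = (b1,b2,0):
  integrand Gamma(b1 - s) Gamma(b2 - s) Gamma(s) / Gamma(1 + s) * z^s.
  The contour L is the vertical line Re s = c with 0 < c < min b1 b2
  (separating the poles of Gamma(b_j - s) from those of Gamma(s)); we take
  c = min b1 b2 / 2.  With s = c + i t, ds = i dt, so the factor 1/(2 pi i)
  becomes 1/(2 pi).  For z > 0 and b1, b2 > 0 the integral converges absolutely.\<close>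

definition meijerG_2113_integrand :: "real \<Rightarrow> real \<Rightarrow> real \<Rightarrow> complex \<Rightarrow> complex" where
  "meijerG_2113_integrand b1 b2 z s =
     Gamma (complex_of_real b1 - s) * Gamma (complex_of_real b2 - s) * Gamma s / Gamma (1 + s)
       * (complex_of_real z powr s)"

definition meijerG_2113 :: "real \<Rightarrow> real \<Rightarrow> real \<Rightarrow> real" where
  "meijerG_2113 b1 b2 z =
     (let c = min b1 b2 / 2 in
       Re ((1 / (2 * pi)) *
           (LINT t|lborel. meijerG_2113_integrand b1 b2 z (Complex c t))))"

text \<open>l-th moment of |h_i||g_i| (mixture-Gamma factors).\<close>
definition mu_chi ::
  "nat \<Rightarrow> (nat \<Rightarrow> real) \<Rightarrow> (nat \<Rightarrow> real) \<Rightarrow> real \<Rightarrow>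
   nat \<Rightarrow> (nat \<Rightarrow> real) \<Rightarrow> (nat \<Rightarrow> real) \<Rightarrow> real \<Rightarrow> nat \<Rightarrow> real" where
  "mu_chi M a1 b1 c1 K a2 b2 c2 l =
     (\<Sum>m=1..M. \<Sum>k=1..K.
        a1 m * a2 k * (c1 / c2) powr (- (b1 m - b2 k) / 2)
        * (c1 * c2) powr (- (b1 m + b2 k + real l) / 2)
        * Gamma (b1 m + real l / 2) * Gamma (b2 k + real l / 2))"

text \<open>Moment of a sum of n i.i.d. copies, given the moment function mu of one term:
  the nested multinomial sum of the paper, written recursively.
  mu_sum mu 0 l is the moment of the empty sum (1 if l = 0, else 0), so that
  mu_sum mu 1 l = mu l and
  mu_sum mu (n+1) l = sum_{l1=0..l} (l choose l1) mu(l - l1) mu_sum mu n l1,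
  which unfolds exactly to the nested sum over l >= l1 >= ... >= l_{N-1}.\<close>
primrec mu_sum :: "(nat \<Rightarrow> real) \<Rightarrow> nat \<Rightarrow> nat \<Rightarrow> real" where
  "mu_sum mu 0 l = (if l = 0 then 1 else 0)"
| "mu_sum mu (Suc n) l = (\<Sum>l1=0..l. real (l choose l1) * mu (l - l1) * mu_sum mu n l1)"

definition genK_aA :: "(nat \<Rightarrow> real) \<Rightarrow> real" where
  "genK_aA muA = muA 6 * muA 2 + (muA 2)^2 * muA 4 - 2 * (muA 4)^2"

definition genK_bA :: "(nat \<Rightarrow> real) \<Rightarrow> real" where
  "genK_bA muA = muA 6 * muA 2 - 4 * (muA 4)^2 + 3 * (muA 2)^2 * muA 4"

definition genK_cA :: "(nat \<Rightarrow> real) \<Rightarrow> real" where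
  "genK_cA muA = 2 * (muA 2)^2 * muA 4"

definition genK_OmegaA :: "(nat \<Rightarrow> real) \<Rightarrow> real" where
  "genK_OmegaA muA = muA 2"

definition genK_kA :: "(nat \<Rightarrow> real) \<Rightarrow> real" where
  "genK_kA muA = - genK_bA muA / (2 * genK_aA muA)
     + sqrt ((genK_bA muA)^2 - 4 * genK_aA muA * genK_cA muA) / (2 * genK_aA muA)"

definition genK_mA :: "(nat \<Rightarrow> real) \<Rightarrow> real" where
  "genK_mA muA = - genK_bA muA / (2 * genK_aA muA)
     - sqrt ((genK_bA muA)^2 - 4 * genK_aA muA * genK_cA muA) / (2 * genK_aA muA)"

definition genK_Xi :: "(nat \<Rightarrow> real) \<Rightarrow> real" where
  "genK_Xi muA = sqrt (genK_kA muA * genK_mA muA / genK_OmegaA muA)"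

definition genK_cdf :: "real \<Rightarrow> real \<Rightarrow> real \<Rightarrow> real \<Rightarrow> real" where
  "genK_cdf kA mA Xi x = meijerG_2113 kA mA (Xi^2 * x^2) / (Gamma kA * Gamma mA)"

definition mixgamma_pdf :: "nat \<Rightarrow> (nat \<Rightarrow> real) \<Rightarrow> (nat \<Rightarrow> real) \<Rightarrow> real \<Rightarrow> real \<Rightarrow> real" where
  "mixgamma_pdf M a b c x =
     (if 0 \<le> x then (\<Sum>m=1..M. 2 * a m * x powr (2 * b m - 1) * exp (- c * x^2)) else 0)"

definition sdnr :: "real \<Rightarrow> real \<Rightarrow> real \<Rightarrow> real \<Rightarrow> real" where
  "sdnr kt kr \<gamma> A = A^2 / ((kt^2 + kr^2) * A^2 + 1 / \<gamma>)"

end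

theory Submission
  imports Defs
begin

text \<open>The hardware impairments cap the SDNR at \<open>1/\<kappa>\<close> with \<open>\<kappa> = \<kappa>\<^sub>t\<^sup>2 + \<kappa>\<^sub>r\<^sup>2\<close>, so no rate
  above \<open>log\<^sub>2 (1 + 1/\<kappa>)\<close> is ever supported and the throughput vanishes there.  Below the
  ceiling, \<open>log\<^sub>2 (1 + \<gamma>\<^sub>u) > r\<close> is equivalent to \<open>A\<^sup>2 > y\<close> for an explicit threshold \<open>y > 0\<close>;
  as \<open>A > 0\<close> almost surely this is the event \<open>A > \<surd>y\<close>, whose probability is
  \<open>1 - F\<^sub>A(\<surd>y)\<close>, and \<open>\<Xi>\<^sup>2 (\<surd>y)\<^sup>2 = \<Xi>\<^sup>2 y\<close> gives the argument of the Meijer G-function.\<close>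

text \<open>Since \<open>0 powr s = 0\<close>, the Mellin--Barnes integrand vanishes identically at \<open>z = 0\<close>; this
  agrees with the limit of the G-function and makes the model give \<open>F\<^sub>A(0) = 0\<close>.\<close>

lemma meijerG_2113_zero [simp]: "meijerG_2113 b1 b2 0 = 0"
  by (simp add: meijerG_2113_def meijerG_2113_integrand_def Let_def)

lemma sdnr_nonneg:
  assumes "\<gamma> > 0"
  shows "sdnr kt kr \<gamma> a \<ge> 0"
  using assms by (simp add: sdnr_def add_nonneg_pos)

lemma sdnr_less_ceiling:
  assumes "kt^2 + kr^2 > 0" and "\<gamma> > 0"
  shows "sdnr kt kr \<gamma> a < 1 / (kt^2 + kr^2)"
  using assms by (simp add: sdnr_def divide_simps add_nonneg_pos)

lemma log_sdnr_less_ceiling: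
  assumes "kt^2 + kr^2 > 0" and "\<gamma> > 0"
  shows "log 2 (1 + sdnr kt kr \<gamma> a) < log 2 (1 / (kt^2 + kr^2) + 1)"
  using sdnr_less_ceiling[OF assms, of a] sdnr_nonneg[OF \<open>\<gamma> > 0\<close>, of kt kr a] assms(1)
  by (simp add: add_pos_pos)

lemma less_log_ceiling_iff:
  fixes \<kappa> r :: real
  assumes "\<kappa> > 0"
  shows "r < log 2 (1 / \<kappa> + 1) \<longleftrightarrow> \<kappa> * (2 powr r - 1) < 1"
proof -
  have "r < log 2 (1 / \<kappa> + 1) \<longleftrightarrow> 2 powr r < 1 / \<kappa> + 1"
    using assms by (subst less_log_iff) (auto simp: add_pos_pos)
  also have "\<dots> \<longleftrightarrow> \<kappa> * (2 powr r - 1) < 1"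
    using assms by (simp add: field_simps)
  finally show ?thesis .
qed

lemma rate_gt_sdnr_iff:
  fixes kt kr \<gamma> r a :: real
  defines "t \<equiv> 2 powr r - 1" and "\<kappa> \<equiv> kt^2 + kr^2"
  assumes "\<gamma> > 0" and "\<kappa> * t < 1"
  shows "r < log 2 (1 + sdnr kt kr \<gamma> a) \<longleftrightarrow> t / \<gamma> / (1 - \<kappa> * t) < a^2"
proof -
  have denom_pos: "\<kappa> * a^2 + 1 / \<gamma> > 0"
    using assms by (simp add: \<kappa>_def add_nonneg_pos)
  have "r < log 2 (1 + sdnr kt kr \<gamma> a) \<longleftrightarrow> t < sdnr kt kr \<gamma> a"
    using sdnr_nonneg[OF \<open>\<gamma> > 0\<close>, of kt kr a]
    by (subst less_log_iff) (auto simp: t_def)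
  also have "\<dots> \<longleftrightarrow> t * (\<kappa> * a^2 + 1 / \<gamma>) < a^2"
    using denom_pos by (simp add: sdnr_def \<kappa>_def pos_less_divide_eq)
  also have "\<dots> \<longleftrightarrow> t / \<gamma> / (1 - \<kappa> * t) < a^2"
    using \<open>\<kappa> * t < 1\<close>
    by (simp add: pos_divide_less_eq algebra_simps del: divide_divide_eq_left)
  finally show ?thesis .
qed

lemma (in prob_space) prob_square_gt:
  fixes X :: "'a \<Rightarrow> real"
  assumes X: "X \<in> borel_measurable M"
    and pos: "prob {\<omega>\<in>space M. X \<omega> \<le> 0} = 0"
    and "s \<ge> 0"
  shows "prob {\<omega>\<in>space M. s^2 < (X \<omega>)^2} = 1 - prob {\<omega>\<in>space M. X \<omega> \<le> s}"
proof -
  have "{\<omega>\<in>space M. X \<omega> \<le> 0} \<in> events"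
    using X by simp
  then have "AE \<omega> in M. 0 < X \<omega>"
    using pos by (simp add: prob_Collect_eq_0 not_le)
  then have "AE \<omega> in M. s^2 < (X \<omega>)^2 \<longleftrightarrow> \<not> X \<omega> \<le> s"
  proof eventually_elim
    case (elim \<omega>)
    then show ?case
      using \<open>s \<ge> 0\<close> power_less_imp_less_base[of s 2 "X \<omega>"]
      by (auto intro: power_strict_mono)
  qed
  then have "prob {\<omega>\<in>space M. s^2 < (X \<omega>)^2} = prob {\<omega>\<in>space M. \<not> X \<omega> \<le> s}"
    using X by (intro prob_eq_AE) auto
  also have "\<dots> = 1 - prob {\<omega>\<in>space M. X \<omega> \<le> s}"
    using X by (intro prob_neg) auto
  finally show ?thesis .
qed

lemma (in prob_space) prob_rate_gt_sdnr:
  fixes X :: "'a \<Rightarrow> real" and kt kr \<gamma> r :: real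
  defines "t \<equiv> 2 powr r - 1" and "\<kappa> \<equiv> kt^2 + kr^2"
  assumes X: "X \<in> borel_measurable M" and pos: "prob {\<omega>\<in>space M. X \<omega> \<le> 0} = 0"
    and "\<gamma> > 0" and "r > 0" and "\<kappa> * t < 1"
  shows "prob {\<omega>\<in>space M. r < log 2 (1 + sdnr kt kr \<gamma> (X \<omega>))}
           = 1 - prob {\<omega>\<in>space M. X \<omega> \<le> sqrt (t / \<gamma> / (1 - \<kappa> * t))}"
proof -
  define y where "y = t / \<gamma> / (1 - \<kappa> * t)"
  have "y > 0"
    using assms by (simp add: y_def t_def)
  have "prob {\<omega>\<in>space M. r < log 2 (1 + sdnr kt kr \<gamma> (X \<omega>))}
      = prob {\<omega>\<in>space M. (sqrt y)^2 < (X \<omega>)^2}"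
    using rate_gt_sdnr_iff[OF \<open>\<gamma> > 0\<close>, of kt kr r] \<open>\<kappa> * t < 1\<close> \<open>y > 0\<close>
    by (simp add: y_def t_def \<kappa>_def)
  also have "\<dots> = 1 - prob {\<omega>\<in>space M. X \<omega> \<le> sqrt y}"
    using X pos \<open>y > 0\<close> by (intro prob_square_gt) auto
  finally show ?thesis
    by (simp add: y_def)
qed

lemma (in prob_space) prob_rate_gt_sdnr_beyond_ceiling:
  assumes "kt^2 + kr^2 > 0" and "\<gamma> > 0" and "log 2 (1 / (kt^2 + kr^2) + 1) \<le> r"
  shows "prob {\<omega>\<in>space M. r < log 2 (1 + sdnr kt kr \<gamma> (X \<omega>))} = 0"
proof -
  have "{\<omega>\<in>space M. r < log 2 (1 + sdnr kt kr \<gamma> (X \<omega>))} = {}"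
    using log_sdnr_less_ceiling[OF assms(1,2)] assms(3)
    by (auto simp: not_less intro: less_imp_le order_trans)
  then show ?thesis
    by (simp only: measure_empty)
qed

theorem proposition1:
  fixes P :: "'w measure"
    and N M K :: nat
    and a1 b1 a2 b2 :: "nat \<Rightarrow> real"
    and c1 c2 kt kr \<gamma> rth :: real
    and h g :: "nat \<Rightarrow> 'w \<Rightarrow> real"
  assumes prob: "prob_space P"
    and N: "N \<ge> 1"
    and kt: "kt \<ge> 0" and kr: "kr \<ge> 0" and kpos: "kt^2 + kr^2 > 0"
    and gam: "\<gamma> > 0"
    and rth: "rth > 0"
    and par1: "\<forall>m\<in>{1..M}. a1 m > 0 \<and> b1 m > 0" and c1: "c1 > 0"
    and par2: "\<forall>k\<in>{1..K}. a2 k > 0 \<and> b2 k > 0" and c2: "c2 > 0"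
    and indep: "prob_space.indep_vars P (\<lambda>_. borel)
                  (\<lambda>j. case j of Inl i \<Rightarrow> h i | Inr i \<Rightarrow> g i)
                  (Inl ` {1..N} \<union> Inr ` {1..N})"
    and dist_h: "\<forall>i\<in>{1..N}. distributed P lborel (h i) (\<lambda>x. ennreal (mixgamma_pdf M a1 b1 c1 x))"
    and dist_g: "\<forall>i\<in>{1..N}. distributed P lborel (g i) (\<lambda>x. ennreal (mixgamma_pdf K a2 b2 c2 x))"
    and cdf_model: "\<forall>x\<ge>0.
          measure P {\<omega>\<in>space P. (\<Sum>i=1..N. h i \<omega> * g i \<omega>) \<le> x}
          = genK_cdf (genK_kA (mu_sum (mu_chi M a1 b1 c1 K a2 b2 c2) N))
                     (genK_mA (mu_sum (mu_chi M a1 b1 c1 K a2 b2 c2) N))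
                     (genK_Xi (mu_sum (mu_chi M a1 b1 c1 K a2 b2 c2) N)) x"
  shows "rth * measure P {\<omega>\<in>space P.
            log 2 (1 + sdnr kt kr \<gamma> (\<Sum>i=1..N. h i \<omega> * g i \<omega>)) > rth}
         = (let muA = mu_sum (mu_chi M a1 b1 c1 K a2 b2 c2) N;
                kA = genK_kA muA; mA = genK_mA muA; Xi = genK_Xi muA;
                \<kappa> = kt^2 + kr^2
            in if rth < log 2 (1 / \<kappa> + 1)
               then rth * (1 - meijerG_2113 kA mA
                      (Xi^2 * ((2 powr rth - 1) / \<gamma>) / (1 - \<kappa> * (2 powr rth - 1)))
                      / (Gamma kA * Gamma mA))
               else 0)"
proof -
  interpret prob_space P by (rule prob)
  define A where "A \<omega> = (\<Sum>i=1..N. h i \<omega> * g i \<omega>)" for \<omega>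
  define \<kappa> where "\<kappa> = kt^2 + kr^2"
  define t where "t = 2 powr rth - 1"
  define muA where "muA = mu_sum (mu_chi M a1 b1 c1 K a2 b2 c2) N"
  have cdf: "\<forall>x\<ge>0. prob {\<omega>\<in>space P. A \<omega> \<le> x} = genK_cdf (genK_kA muA) (genK_mA muA) (genK_Xi muA) x"
    unfolding A_def muA_def by (rule cdf_model)
  have A_nonpos_null: "prob {\<omega>\<in>space P. A \<omega> \<le> 0} = 0"
    using cdf by (simp add: genK_cdf_def)
  have "h i \<in> borel_measurable P" "g i \<in> borel_measurable P" if "i \<in> {1..N}" for i
    using that dist_h dist_g by (metis distributed_measurable measurable_lborel1)+
  then have A_measurable: "A \<in> borel_measurable P"
    unfolding A_def by (intro borel_measurable_sum borel_measurable_times) auto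
  show ?thesis
  proof (cases "rth < log 2 (1 / \<kappa> + 1)")
    case True
    with kpos have "\<kappa> * t < 1"
      by (simp add: less_log_ceiling_iff \<kappa>_def t_def)
    then have "t / \<gamma> / (1 - \<kappa> * t) > 0"
      using gam rth by (simp add: t_def)
    then show ?thesis
      using True cdf prob_rate_gt_sdnr[OF A_measurable A_nonpos_null gam rth] \<open>\<kappa> * t < 1\<close>
      by (simp add: A_def muA_def Let_def genK_cdf_def t_def \<kappa>_def)
  next
    case False
    then show ?thesis
      using prob_rate_gt_sdnr_beyond_ceiling[OF kpos gam, of rth A]
      by (simp add: A_def Let_def \<kappa>_def)
  qed
qed

end
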